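(* Let $\mathrm L$ be a spline-admissible operator on $\mathcal S'(\mathbb T^d)$ with pseudoinverse $\mathrm L^\dagger$, and let $\tau\in\mathbb R$. The following are equivalent: (a) $\mathcal H_2^{-\tau}(\mathbb T^d)\subseteq\mathcal C_{\mathrm L}(\mathbb T^d)$ (continuous embedding); (b) $\mathrm L^\dagger Ш\in\mathcal H_2^{\tau}(\mathbb T^d)$; (c) $\sum_{\bm k\in\mathbb Z^d}(1+\|\bm k\|^2)^{\tau}|\widehat{L^\dagger}[\bm k]|^2<\infty$. In particular ($\tau=0$), $L_2(\mathbb T^d)\subseteq\mathcal C_{\mathrm L}(\mathbb T^d)$ if and only if $\mathrm L^\dagger Ш\in L_2(\mathbb T^d)$ if and only if $(\widehat{L^\dagger}[\bm k])_{\bm k}\in\ell_2(\mathbb Z^d)$.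
   Context: $\mathbb T^d=\mathbb R^d/2\pi\mathbb Z^d$; $\mathcal S(\mathbb T^d)$ the smooth periodic functions and $\mathcal S'(\mathbb T^d)$ its dual, with Fourier expansion $f=\sum\widehat f[\bm k]e_{\bm k}$, $e_{\bm k}(\bm x)=e^{\mathrm i\langle\bm x,\bm k\rangle}$. Linear shift-invariant continuous operators on $\mathcal S'$ act by $\mathrm Lf=\sum\widehat L[\bm k]\widehat f[\bm k]e_{\bm k}$ with slowly growing $\widehat L$; $\mathrm L^*$ has sequence $\overline{\widehat L}$. $\mathrm L$ is spline-admissible if its null space $\mathcal N_{\mathrm L}$ is finite-dimensional and it has a pseudoinverse $\mathrm L^\dagger$ of the same type ($\mathrm L\mathrm L^\dagger\mathrm L=\mathrm L$, $\mathrm L^\dagger\mathrm L\mathrm L^\dagger=\mathrm L^\dagger$, $\mathrm L\mathrm L^\dagger$, $\mathrm L^\dagger\mathrm L$ self-adjoint), with Fourier sequence $\widehat{L^\dagger}[\bm k]=1/\widehat L[\bm k]$ where $\widehat L[\bm k]\neq0$ and $0$ otherwise; $\mathrm{Proj}_{\mathcal N_{\mathrm L}}f=\sum_{\bm k:\widehat L[\bm k]=0}\widehat f[\bm k]e_{\bm k}$. $Ш$ is the Dirac comb ($\widehat Ш[\bm k]=1$). Periodic Sobolev space: $\mathcal H_2^\tau(\mathbb T^d)=\{f\in\mathcal S':\sum(1+\|\bm k\|^2)^\tau|\widehat f[\bm k]|^2<\infty\}$ with that Hilbert norm; $\mathcal H_2^0=L_2(\mathbb T^d)$. Measurement space $\mathcal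 C_{\mathrm L}(\mathbb T^d)=\{g\in\mathcal S':(\mathrm L^\dagger)^*g\in\mathcal C(\mathbb T^d)\}$ with norm $(\|(\mathrm L^\dagger)^*g\|_\infty^2+\|\mathrm{Proj}_{\mathcal N_{\mathrm L}}g\|_2^2)^{1/2}$ (where $\|\cdot\|_2$ is the normalized $L_2$ norm). *)

theory Defs
  imports "HOL-Analysis.Analysis"
begin

text \<open>Periodic distributions on the torus T^d = R^d / 2 pi Z^d are represented by their
Fourier sequences indexed by Z^d = int^'n (the dimension d = CARD('n)).
A sequence is the Fourier sequence of an element of S'(T^d) iff it is slowly growing.\<close>

definition knorm :: "int^'n \<Rightarrow> real" where
  "knorm k = sqrt (\<Sum>i\<in>UNIV. (real_of_int (k $ i))^2)"

definition slowly_growing :: "(int^'n \<Rightarrow> complex) \<Rightarrow> bool" where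
  "slowly_growing c \<longleftrightarrow> (\<exists>C::real. \<exists>N::nat. \<forall>k. cmod (c k) \<le> C * (1 + knorm k) ^ N)"

definition fexp :: "int^'n \<Rightarrow> real^'n \<Rightarrow> complex" where
  "fexp k x = cis (\<Sum>i\<in>UNIV. x $ i * real_of_int (k $ i))"

definition torus_cell :: "(real^'n) set" where
  "torus_cell = cbox 0 (\<chi> i. 2 * pi)"

definition fourier_coeff :: "(real^'n \<Rightarrow> complex) \<Rightarrow> int^'n \<Rightarrow> complex" where
  "fourier_coeff h k = complex_of_real (1 / (2 * pi) ^ CARD('n)) *
      integral torus_cell (\<lambda>x. h x * cnj (fexp k x))"

definition periodic_cont :: "(real^'n \<Rightarrow> complex) \<Rightarrow> bool" where
  "periodic_cont h \<longleftrightarrow> continuous_on UNIV h \<and>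
     (\<forall>x i. h (x + (2 * pi) *\<^sub>R axis i 1) = h x)"

definition represents :: "(real^'n \<Rightarrow> complex) \<Rightarrow> (int^'n \<Rightarrow> complex) \<Rightarrow> bool" where
  "represents h c \<longleftrightarrow> periodic_cont h \<and> (\<forall>k. fourier_coeff h k = c k)"

definition is_continuous_dist :: "(int^'n \<Rightarrow> complex) \<Rightarrow> bool" where
  "is_continuous_dist c \<longleftrightarrow> (\<exists>h. represents h c)"

text \<open>Linear shift-invariant operator with Fourier sequence Lh applied to f.\<close>
definition lsi :: "(int^'n \<Rightarrow> complex) \<Rightarrow> (int^'n \<Rightarrow> complex) \<Rightarrow> (int^'n \<Rightarrow> complex)" where
  "lsi Lh f = (\<lambda>k. Lh k * f k)"

text \<open>Adjoint operator: Fourier sequence is the conjugate.\<close>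
definition adj :: "(int^'n \<Rightarrow> complex) \<Rightarrow> (int^'n \<Rightarrow> complex)" where
  "adj Lh = (\<lambda>k. cnj (Lh k))"

text \<open>Fourier sequence of the pseudoinverse.\<close>
definition pinv :: "(int^'n \<Rightarrow> complex) \<Rightarrow> (int^'n \<Rightarrow> complex)" where
  "pinv Lh = (\<lambda>k. if Lh k \<noteq> 0 then 1 / Lh k else 0)"

definition dirac_comb :: "int^'n \<Rightarrow> complex" where
  "dirac_comb = (\<lambda>k. 1)"

text \<open>Spline-admissible: L is LSI continuous (slowly growing symbol), its null space
{f. Lf = 0} = span {e_k : Lh k = 0} is finite-dimensional, and the pseudoinverse
(whose sequence is necessarily pinv Lh) is again LSI continuous, i.e. slowly growing.\<close>
definition spline_admissible :: "(int^'n \<Rightarrow> complex) \<Rightarrow> bool" where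
  "spline_admissible Lh \<longleftrightarrow> slowly_growing Lh \<and> finite {k. Lh k = 0} \<and>
      slowly_growing (pinv Lh)"

definition sobolev :: "real \<Rightarrow> (int^'n \<Rightarrow> complex) \<Rightarrow> bool" where
  "sobolev \<tau> f \<longleftrightarrow> slowly_growing f \<and>
     (\<lambda>k. (1 + (knorm k)^2) powr \<tau> * (cmod (f k))^2) summable_on UNIV"

definition sobolev_norm :: "real \<Rightarrow> (int^'n \<Rightarrow> complex) \<Rightarrow> real" where
  "sobolev_norm \<tau> f = sqrt (\<Sum>\<^sub>\<infinity>k. (1 + (knorm k)^2) powr \<tau> * (cmod (f k))^2)"

definition proj_null_fun :: "(int^'n \<Rightarrow> complex) \<Rightarrow> (int^'n \<Rightarrow> complex) \<Rightarrow> real^'n \<Rightarrow> complex" where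
  "proj_null_fun Lh g = (\<lambda>x. \<Sum>k\<in>{k. Lh k = 0}. g k * fexp k x)"

definition L2_norm_torus :: "(real^'n \<Rightarrow> complex) \<Rightarrow> real" where
  "L2_norm_torus h = sqrt ((1 / (2 * pi) ^ CARD('n)) * integral torus_cell (\<lambda>x. (cmod (h x))^2))"

definition in_CL :: "(int^'n \<Rightarrow> complex) \<Rightarrow> (int^'n \<Rightarrow> complex) \<Rightarrow> bool" where
  "in_CL Lh g \<longleftrightarrow> slowly_growing g \<and> is_continuous_dist (lsi (adj (pinv Lh)) g)"

definition CL_norm :: "(int^'n \<Rightarrow> complex) \<Rightarrow> (int^'n \<Rightarrow> complex) \<Rightarrow> real" where
  "CL_norm Lh g = sqrt ((SUP x\<in>UNIV. cmod ((SOME h. represents h (lsi (adj (pinv Lh)) g)) x))^2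
                        + (L2_norm_torus (proj_null_fun Lh g))^2)"

text \<open>Continuous embedding H_2^{-tau} into C_L (for linear maps: inclusion plus boundedness).\<close>
definition sobolev_embeds_CL :: "real \<Rightarrow> (int^'n \<Rightarrow> complex) \<Rightarrow> bool" where
  "sobolev_embeds_CL \<tau> Lh \<longleftrightarrow>
     (\<forall>g. sobolev (-\<tau>) g \<longrightarrow> in_CL Lh g) \<and>
     (\<exists>C. \<forall>g. sobolev (-\<tau>) g \<longrightarrow> CL_norm Lh g \<le> C * sobolev_norm (-\<tau>) g)"

end

theory Submission
  imports Defs
begin

text \<open>The Fourier sequence of \<open>(L\<^sup>\<dagger>)\<^sup>* g\<close> is \<open>cnj (L\<^sup>\<dagger>[k]) g[k]\<close>. If
  \<open>\<Sum> (1 + |k|\<^sup>2)\<^sup>\<tau> |L\<^sup>\<dagger>[k]|\<^sup>2 < \<infinity>\<close>, a weighted Cauchy--Schwarz inequality shows that this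
  sequence is absolutely summable, with \<open>\<ell>\<^sub>1\<close>-norm bounded by a multiple of the \<open>H\<^sup>-\<^sup>\<tau>\<close>-norm of
  \<open>g\<close>; hence it is the Fourier sequence of a uniformly convergent, continuous Fourier series,
  and the null-space component is a trigonometric polynomial. Conversely, for finite \<open>F\<close> the
  test sequence \<open>g[k] = (1 + |k|\<^sup>2)\<^sup>\<tau> L\<^sup>\<dagger>[k]\<close> on \<open>F\<close> is mapped to the trigonometric
  polynomial \<open>\<Sum>\<^sub>F s\<^sub>k e\<^sub>k\<close>, \<open>s\<^sub>k = (1 + |k|\<^sup>2)\<^sup>\<tau> |L\<^sup>\<dagger>[k]|\<^sup>2\<close>; its value at \<open>0\<close> is
  \<open>\<Sum>\<^sub>F s\<^sub>k\<close> while \<open>\<parallel>g\<parallel> = (\<Sum>\<^sub>F s\<^sub>k)\<^sup>1\<^sup>/\<^sup>2\<close>, so the embedding bounds all partial sums.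
  Since the norm of \<open>C\<^sub>L\<close> refers to the continuous representative chosen by \<open>SOME\<close>, we also
  need that continuous periodic functions are determined by their Fourier coefficients; this
  follows from the Stone--Weierstrass theorem applied on the image of the torus under
  \<open>x \<mapsto> (cos x, sin x)\<close>. Finally, \<open>L\<^sup>\<dagger>\<close> applied to the Dirac comb has Fourier sequence \<open>L\<^sup>\<dagger>\<close>.\<close>

section \<open>Fourier exponentials and continuous periodic functions\<close>

lemma fexp_add: "fexp (j + k) x = fexp j x * fexp k x"
  by (simp add: fexp_def cis_mult distrib_left sum.distrib)

lemma fexp_uminus: "fexp (-k) x = cnj (fexp k x)"
  by (simp add: fexp_def cis_cnj sum_negf)

lemma fexp_diff: "fexp (j - k) x = fexp j x * cnj (fexp k x)"
  using fexp_add[of j "-k" x] by (simp add: fexp_uminus)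

lemma fexp_0 [simp]: "fexp 0 x = 1"
  by (simp add: fexp_def)

lemma fexp_at_0 [simp]: "fexp k 0 = 1"
  by (simp add: fexp_def)

lemma norm_fexp [simp]: "cmod (fexp k x) = 1"
  by (simp add: fexp_def)

lemma fexp_translate: "fexp k (x + v) = fexp k x * fexp k v"
  by (simp add: fexp_def cis_mult distrib_right sum.distrib)

lemma fexp_scaleR_axis: "fexp k (s *\<^sub>R axis i 1) = cis (s * of_int (k $ i))"
proof -
  have "(s *\<^sub>R axis i (1::real)) $ j * of_int (k $ j) = (if j = i then s * of_int (k $ i) else 0)" for j
    by (simp add: axis_def)
  then show ?thesis by (simp add: fexp_def)
qed

lemma fexp_axis_1: "fexp (axis i 1) x = cis (x $ i)"
proof -
  have "x $ j * of_int (axis i (1::int) $ j) = (if j = i then x $ i else 0)" for j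
    by (simp add: axis_def)
  then show ?thesis by (simp add: fexp_def)
qed

lemma fexp_periodic: "fexp k (x + (2 * pi) *\<^sub>R axis i 1) = fexp k x"
proof -
  have "cis (2 * pi * of_int (k $ i)) = 1" by (rule cis_multiple_2pi) simp
  then show ?thesis by (simp add: fexp_translate fexp_scaleR_axis)
qed

lemma continuous_on_fexp: "continuous_on S (fexp k)"
  unfolding fexp_def by (intro continuous_intros)

lemma periodic_cont_shift_nat:
  assumes "periodic_cont h"
  shows "h (x + (2 * pi * real m) *\<^sub>R axis i 1) = h x"
proof (induction m arbitrary: x)
  case (Suc m)
  have "x + (2 * pi * real (Suc m)) *\<^sub>R axis i 1 = (x + (2 * pi * real m) *\<^sub>R axis i 1) + (2 * pi) *\<^sub>R axis i 1"
    by (simp add: algebra_simps scaleR_add_left)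
  also have "h \<dots> = h (x + (2 * pi * real m) *\<^sub>R axis i 1)"
    using assms by (simp add: periodic_cont_def)
  finally show ?case using Suc.IH by simp
qed simp

lemma periodic_cont_shift_int:
  assumes "periodic_cont h"
  shows "h (x + (2 * pi * of_int m) *\<^sub>R axis i 1) = h x"
proof (cases "m \<ge> 0")
  case True
  then show ?thesis using periodic_cont_shift_nat[OF assms, of x "nat m"] by simp
next
  case False
  define y where "y = x + (2 * pi * of_int m) *\<^sub>R axis i 1"
  have "x = y + (2 * pi * real (nat (- m))) *\<^sub>R axis i 1"
    using False by (simp add: y_def)
  then have "h x = h y"
    using periodic_cont_shift_nat[OF assms, of y "nat (- m)" i] by simp
  then show ?thesis by (simp add: y_def)
qed

lemma periodic_cont_shift_lattice:
  assumes "periodic_cont h"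
  shows "h (x + (\<chi> i. 2 * pi * of_int (n i))) = h x"
proof -
  have "h (x + (\<chi> i. if i \<in> A then 2 * pi * of_int (n i) else 0)) = h x" if "finite A" for A
    using that
  proof (induction A rule: finite_induct)
    case empty
    have "(\<chi> i. if i \<in> {} then 2 * pi * of_int (n i) else 0) = (0::real^'a)"
      by (simp add: vec_eq_iff)
    then show ?case by simp
  next
    case (insert a A)
    have "(\<chi> i. if i \<in> insert a A then 2 * pi * of_int (n i) else 0) =
          (\<chi> i. if i \<in> A then 2 * pi * of_int (n i) else 0) + (2 * pi * of_int (n a)) *\<^sub>R axis a (1::real)"
      using insert by (auto simp: vec_eq_iff axis_def)
    then show ?case using insert periodic_cont_shift_int[OF assms] by (simp add: add.assoc[symmetric])
  qed
  from this[of UNIV] show ?thesis by simp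
qed

lemma periodic_cont_value_in_torus_cell:
  assumes "periodic_cont h"
  obtains y where "y \<in> torus_cell" "h x = h y"
proof -
  define n where "n i = \<lfloor>x $ i / (2 * pi)\<rfloor>" for i
  define y where "y = x - (\<chi> i. 2 * pi * of_int (n i))"
  have "y \<in> torus_cell"
    unfolding torus_cell_def mem_box_cart
  proof
    fix i
    have "of_int (n i) \<le> x $ i / (2 * pi)" "x $ i / (2 * pi) < of_int (n i) + 1"
      unfolding n_def by linarith+
    then have "2 * pi * of_int (n i) \<le> x $ i" "x $ i < 2 * pi * of_int (n i) + 2 * pi"
      using pi_gt_zero by (simp_all add: field_simps)
    then show "0 $ i \<le> y $ i \<and> y $ i \<le> (\<chi> i. 2 * pi) $ i" by (simp add: y_def)
  qed
  moreover have "h x = h y"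
    using periodic_cont_shift_lattice[OF assms, of y n] by (simp add: y_def)
  ultimately show ?thesis by (rule that)
qed

lemma periodic_cont_bounded:
  assumes "periodic_cont h"
  obtains B where "\<And>x. cmod (h x) \<le> B"
proof -
  have "compact (h ` torus_cell)"
    using assms by (auto simp: periodic_cont_def torus_cell_def
        intro!: compact_continuous_image continuous_on_subset[of UNIV])
  then obtain B where B: "\<forall>y\<in>h ` torus_cell. cmod y \<le> B"
    by (meson compact_imp_bounded bounded_iff)
  have "cmod (h x) \<le> B" for x
  proof -
    obtain y where "y \<in> torus_cell" "h x = h y"
      using periodic_cont_value_in_torus_cell[OF assms] .
    then show ?thesis using B by simp
  qed
  then show ?thesis by (rule that)
qed

lemma periodic_cont_diff:
  "periodic_cont h \<Longrightarrow> periodic_cont g \<Longrightarrow> periodic_cont (\<lambda>x. h x - g x)"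
  by (simp add: periodic_cont_def continuous_on_diff)

lemma periodic_cont_eqI:
  assumes "periodic_cont h" "periodic_cont g" "\<And>x. x \<in> torus_cell \<Longrightarrow> h x = g x"
  shows "h = g"
proof
  fix x
  obtain y where "y \<in> torus_cell" "h x - g x = h y - g y"
    using periodic_cont_value_in_torus_cell[OF periodic_cont_diff[OF assms(1,2)]] by blast
  then show "h x = g x" using assms(3) by simp
qed

section \<open>Integration over the fundamental cell\<close>

lemma continuous_integrable_on_torus_cell:
  "continuous_on UNIV (f :: real^'n \<Rightarrow> 'a::banach) \<Longrightarrow> f integrable_on torus_cell"
  unfolding torus_cell_def by (rule integrable_continuous) (auto intro: continuous_on_subset)

lemma content_torus_cell:
  "Henstock_Kurzweil_Integration.content (torus_cell :: (real^'n) set) = (2 * pi) ^ CARD('n)"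
proof -
  have "torus_cell \<noteq> ({} :: (real^'n) set)"
    unfolding torus_cell_def by (auto simp: box_ne_empty(1) cart_eq_inner_axis[symmetric] Basis_vec_def)
  then show ?thesis unfolding torus_cell_def by (simp add: content_cbox_cart)
qed

lemma norm_integral_torus_cell_le:
  fixes f :: "real^'n \<Rightarrow> 'a::banach"
  assumes "continuous_on UNIV f" "\<And>x. x \<in> torus_cell \<Longrightarrow> norm (f x) \<le> B"
  shows "norm (integral torus_cell f) \<le> B * (2 * pi) ^ CARD('n)"
proof -
  have "0 \<in> (torus_cell :: (real^'n) set)"
    by (simp add: torus_cell_def mem_box_cart)
  then have "0 \<le> B" using assms(2) norm_ge_zero order_trans by blast
  moreover have "(f has_integral integral torus_cell f) torus_cell"
    using continuous_integrable_on_torus_cell[OF assms(1)] by (rule integrable_integral)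
  ultimately show ?thesis
    using has_integral_bound[of B f "integral torus_cell f" 0 "\<chi> i. 2 * pi"] assms(2)
      content_torus_cell[where 'n='n]
    by (simp add: torus_cell_def)
qed

lemma integral_shift_cbox:
  "integral (cbox a b) (\<lambda>x. f (x + c)) = integral (cbox (a + c) (b + c)) f"
proof (cases "f integrable_on cbox (a + c) (b + c)")
  case True
  then have "((f \<circ> (+) c) has_integral integral (cbox (a + c) (b + c)) f) (cbox a b)"
    by (simp add: has_integral_shift_cbox_iff has_integral_integral)
  then show ?thesis by (simp add: o_def add.commute integral_unique)
next
  case False
  then have "\<not> (f \<circ> (+) c) integrable_on cbox a b"
    by (simp add: integrable_on_shift_cbox)
  with False show ?thesis by (simp add: o_def add.commute not_integrable_integral)
qed

lemma integral_split_cart: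
  fixes f :: "real^'n \<Rightarrow> 'a::banach"
  assumes "f integrable_on cbox a b" "a $ i \<le> c" "c \<le> b $ i"
  shows "integral (cbox a b) f =
           integral (cbox a (\<chi> j. if j = i then c else b $ j)) f +
           integral (cbox (\<chi> j. if j = i then c else a $ j) b) f"
proof -
  have "cbox a b \<inter> {x. x \<bullet> axis i 1 \<le> c} = cbox a (\<chi> j. if j = i then c else b $ j)"
       "cbox a b \<inter> {x. c \<le> x \<bullet> axis i 1} = cbox (\<chi> j. if j = i then c else a $ j) b"
    using interval_split_cart[where a = a and b = b and k = i and c = c]
    unfolding min_absorb2[OF assms(3)] max_absorb2[OF assms(2)]
    by (simp_all add: cart_eq_inner_axis[symmetric] interval_cbox_cart)
  then show ?thesis
    using integral_split[OF assms(1), where k = "axis i 1" and c = c] by (auto simp: Basis_vec_def)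
qed

lemma integral_torus_cell_shift_axis:
  fixes f :: "real^'n \<Rightarrow> 'a::banach"
  assumes cont: "continuous_on UNIV f" and per: "\<And>x. f (x + (2 * pi) *\<^sub>R axis i 1) = f x"
    and s: "0 \<le> s" "s \<le> 2 * pi"
  shows "integral torus_cell (\<lambda>x. f (x + s *\<^sub>R axis i 1)) = integral torus_cell f"
proof -
  define b :: "real^'n" where "b = (\<chi> j. 2 * pi)"
  define v :: "real^'n" where "v = s *\<^sub>R axis i 1"
  define w :: "real^'n" where "w = (s - 2 * pi) *\<^sub>R axis i 1"
  have cell: "torus_cell = cbox 0 b" by (simp add: torus_cell_def b_def)
  have integrable: "g integrable_on cbox 0 b" if "continuous_on UNIV g" for g :: "real^'n \<Rightarrow> 'a"
    using continuous_integrable_on_torus_cell[OF that] by (simp add: cell)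
  have shifts: "0 + v = (\<chi> j. if j = i then s else 0 $ j)"
    "(\<chi> j. if j = i then 2 * pi - s else b $ j) + v = b"
    "(\<chi> j. if j = i then 2 * pi - s else 0 $ j) + w = 0"
    "b + w = (\<chi> j. if j = i then s else b $ j)"
    by (simp_all add: v_def w_def b_def axis_def vec_eq_iff)
  have vw: "(\<lambda>x. f (x + v)) = (\<lambda>x. f (x + w))"
  proof
    fix x
    have "x + v = (x + w) + (2 * pi) *\<^sub>R axis i 1"
      by (simp add: v_def w_def algebra_simps scaleR_diff_left)
    then show "f (x + v) = f (x + w)" by (simp only: per)
  qed
  \<comment> \<open>Cut the cell at \<open>2 * pi - s\<close> in direction \<open>i\<close>; the piece beyond the cut is moved back by one period.\<close>
  have "integral (cbox 0 b) (\<lambda>x. f (x + v)) =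
          integral (cbox 0 (\<chi> j. if j = i then 2 * pi - s else b $ j)) (\<lambda>x. f (x + v)) +
          integral (cbox (\<chi> j. if j = i then 2 * pi - s else 0 $ j) b) (\<lambda>x. f (x + v))"
    using s by (intro integral_split_cart integrable continuous_on_compose2[OF cont])
      (auto intro!: continuous_intros simp: b_def)
  also have "integral (cbox 0 (\<chi> j. if j = i then 2 * pi - s else b $ j)) (\<lambda>x. f (x + v)) =
             integral (cbox (\<chi> j. if j = i then s else 0 $ j) b) f"
    using shifts(1,2) by (simp only: integral_shift_cbox)
  also have "integral (cbox (\<chi> j. if j = i then 2 * pi - s else 0 $ j) b) (\<lambda>x. f (x + v)) =
             integral (cbox 0 (\<chi> j. if j = i then s else b $ j)) f"
    unfolding vw using shifts(3,4) by (simp only: integral_shift_cbox)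
  also have "integral (cbox (\<chi> j. if j = i then s else 0 $ j) b) f +
               integral (cbox 0 (\<chi> j. if j = i then s else b $ j)) f = integral (cbox 0 b) f"
    using s integral_split_cart[OF integrable[OF cont], of i s] by (simp add: b_def)
  finally show ?thesis by (simp add: cell v_def)
qed

lemma integral_torus_cell_fexp:
  "integral torus_cell (fexp k :: real^'n \<Rightarrow> complex) = (if k = 0 then (2 * pi) ^ CARD('n) else 0)"
proof (cases "k = 0")
  case True
  have "integral torus_cell (\<lambda>x::real^'n. 1::complex) =
          Henstock_Kurzweil_Integration.content (torus_cell :: (real^'n) set) *\<^sub>R 1"
    unfolding torus_cell_def by (rule integral_const)
  moreover have "fexp 0 = (\<lambda>x::real^'n. 1::complex)" by (simp add: fun_eq_iff)
  ultimately show ?thesis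
    using True by (simp add: content_torus_cell scaleR_conv_of_real)
next
  case False
  then obtain i where ki: "k $ i \<noteq> 0" by (auto simp: vec_eq_iff)
  define s where "s = pi / \<bar>of_int (k $ i)\<bar>"
  have "\<bar>of_int (k $ i)\<bar> \<ge> (1::real)" using ki by linarith
  then have s: "0 \<le> s" "s \<le> 2 * pi"
    using pi_gt_zero by (auto simp: s_def divide_le_eq)
  \<comment> \<open>Translating by half a period of the \<open>i\<close>-th factor changes the sign of \<open>fexp k\<close>.\<close>
  have "cis (s * of_int (k $ i)) = -1"
    using ki by (cases "k $ i > 0") (simp_all add: s_def cis_cnj[symmetric])
  then have "(\<lambda>x. fexp k (x + s *\<^sub>R axis i 1)) = (\<lambda>x. - fexp k x)"
    by (simp add: fexp_translate fexp_scaleR_axis)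
  moreover have "integral torus_cell (\<lambda>x. fexp k (x + s *\<^sub>R axis i 1)) = integral torus_cell (fexp k)"
    by (rule integral_torus_cell_shift_axis[OF continuous_on_fexp fexp_periodic s])
  ultimately have "- integral torus_cell (fexp k) = integral torus_cell (fexp k)"
    by (simp add: integral_neg)
  then show ?thesis using False by simp
qed

lemma integral_torus_cell_fexp_mult_cnj:
  "integral torus_cell (\<lambda>x::real^'n. fexp k x * cnj (fexp m x)) = (if k = m then (2 * pi) ^ CARD('n) else 0)"
  using integral_torus_cell_fexp[of "k - m"] by (simp add: fexp_diff[symmetric])

lemma fourier_coeff_fexp_sum:
  assumes "finite F"
  shows "fourier_coeff (\<lambda>x::real^'n. \<Sum>k\<in>F. a k * fexp k x) m = (if m \<in> F then a m else 0)"
proof -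
  have "integral torus_cell (\<lambda>x::real^'n. (\<Sum>k\<in>F. a k * fexp k x) * cnj (fexp m x)) =
        (\<Sum>k\<in>F. integral torus_cell (\<lambda>x::real^'n. a k * (fexp k x * cnj (fexp m x))))"
    using assms
    by (simp add: sum_distrib_right mult.assoc integral_sum continuous_integrable_on_torus_cell
        continuous_intros continuous_on_fexp)
  also have "\<dots> = (\<Sum>k\<in>F. if m = k then a k * (2 * pi) ^ CARD('n) else 0)"
    by (intro sum.cong refl) (auto simp: integral_torus_cell_fexp_mult_cnj)
  finally show ?thesis
    using assms by (simp add: fourier_coeff_def sum.delta)
qed

lemma represents_fexp_sum:
  assumes "finite F"
  shows "represents (\<lambda>x::real^'n. \<Sum>k\<in>F. a k * fexp k x) (\<lambda>k. if k \<in> F then a k else 0)"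
  using assms
  by (auto simp: represents_def periodic_cont_def fourier_coeff_fexp_sum fexp_periodic
      intro!: continuous_intros continuous_on_fexp)

lemma fourier_coeff_diff:
  assumes "continuous_on UNIV h" "continuous_on UNIV g"
  shows "fourier_coeff (\<lambda>x::real^'n. h x - g x) k = fourier_coeff h k - fourier_coeff g k"
proof -
  have "integral torus_cell (\<lambda>x. (h x - g x) * cnj (fexp k x)) =
          integral torus_cell (\<lambda>x. h x * cnj (fexp k x)) - integral torus_cell (\<lambda>x. g x * cnj (fexp k x))"
    using assms
    by (simp add: left_diff_distrib integral_diff continuous_integrable_on_torus_cell
        continuous_intros continuous_on_fexp)
  then show ?thesis by (simp add: fourier_coeff_def right_diff_distrib)
qed

lemma norm_fourier_coeff_le:
  fixes h :: "real^'n \<Rightarrow> complex"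
  assumes "continuous_on UNIV h" "\<And>x. x \<in> torus_cell \<Longrightarrow> cmod (h x) \<le> B"
  shows "cmod (fourier_coeff h k) \<le> B"
proof -
  have "cmod (integral torus_cell (\<lambda>x. h x * cnj (fexp k x))) \<le> B * (2 * pi) ^ CARD('n)"
    using assms
    by (intro norm_integral_torus_cell_le) (auto simp: norm_mult intro!: continuous_intros continuous_on_fexp)
  moreover have "cmod (fourier_coeff h k) =
      cmod (integral torus_cell (\<lambda>x. h x * cnj (fexp k x))) / (2 * pi) ^ CARD('n)"
    by (simp add: fourier_coeff_def norm_mult norm_divide norm_power)
  ultimately show ?thesis by (simp add: pos_divide_le_eq)
qed

section \<open>Continuous periodic functions are determined by their Fourier coefficients\<close>

inductive_set trig_poly :: "(real^'n \<Rightarrow> complex) set" where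
  fexp: "fexp k \<in> trig_poly"
| add: "f \<in> trig_poly \<Longrightarrow> g \<in> trig_poly \<Longrightarrow> (\<lambda>x. f x + g x) \<in> trig_poly"
| scale: "f \<in> trig_poly \<Longrightarrow> (\<lambda>x. c * f x) \<in> trig_poly"

lemma trig_poly_const: "(\<lambda>x. c) \<in> trig_poly"
  using trig_poly.scale[OF trig_poly.fexp[of 0], of c] by simp

lemma trig_poly_mult_fexp: "g \<in> trig_poly \<Longrightarrow> (\<lambda>x. fexp k x * g x) \<in> trig_poly"
proof (induction g rule: trig_poly.induct)
  case (fexp j)
  then show ?case by (simp add: fexp_add[symmetric] trig_poly.fexp)
next
  case (add f g)
  then show ?case by (simp add: distrib_left trig_poly.add)
next
  case (scale f c)
  then show ?case using trig_poly.scale[of _ c] by (simp add: mult.left_commute)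
qed

lemma trig_poly_mult: "f \<in> trig_poly \<Longrightarrow> g \<in> trig_poly \<Longrightarrow> (\<lambda>x. f x * g x) \<in> trig_poly"
proof (induction f rule: trig_poly.induct)
  case (fexp k)
  then show ?case by (rule trig_poly_mult_fexp)
next
  case (add f1 f2)
  then show ?case by (simp add: distrib_right trig_poly.add)
next
  case (scale f c)
  then show ?case using trig_poly.scale[of _ c] by (simp add: mult.assoc)
qed

lemma trig_poly_sum:
  "finite A \<Longrightarrow> (\<And>a. a \<in> A \<Longrightarrow> f a \<in> trig_poly) \<Longrightarrow> (\<lambda>x. \<Sum>a\<in>A. f a x) \<in> trig_poly"
  by (induction A rule: finite_induct) (simp_all add: trig_poly_const trig_poly.add)

lemma continuous_on_trig_poly: "f \<in> trig_poly \<Longrightarrow> continuous_on UNIV f"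
  by (induction f rule: trig_poly.induct) (auto intro!: continuous_intros continuous_on_fexp)

lemma trig_poly_cos: "(\<lambda>x. complex_of_real (cos (x $ i))) \<in> trig_poly"
proof -
  have "(\<lambda>x. complex_of_real (cos (x $ i))) = (\<lambda>x. (1/2) * fexp (axis i 1) x + (1/2) * fexp (- axis i 1) x)"
    by (simp add: fun_eq_iff fexp_uminus fexp_axis_1 complex_eq_iff)
  then show ?thesis by (simp only:) (intro trig_poly.add trig_poly.scale trig_poly.fexp)
qed

lemma trig_poly_sin: "(\<lambda>x. complex_of_real (sin (x $ i))) \<in> trig_poly"
proof -
  have "(\<lambda>x. complex_of_real (sin (x $ i))) = (\<lambda>x. (-\<i>/2) * fexp (axis i 1) x + (\<i>/2) * fexp (- axis i 1) x)"
    by (simp add: fun_eq_iff fexp_uminus fexp_axis_1 complex_eq_iff)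
  then show ?thesis by (simp only:) (intro trig_poly.add trig_poly.scale trig_poly.fexp)
qed

definition torus_embedding :: "real^'n \<Rightarrow> (real^'n) \<times> (real^'n)" where
  "torus_embedding x = ((\<chi> i. cos (x $ i)), (\<chi> i. sin (x $ i)))"

lemma continuous_on_torus_embedding: "continuous_on A torus_embedding"
  unfolding torus_embedding_def by (auto intro!: continuous_intros continuous_on_vec_lambda)

lemma periodic_cont_torus_embedding_eq:
  assumes "periodic_cont h" "torus_embedding x = torus_embedding y"
  shows "h x = h y"
proof -
  have "sin (x $ i) = sin (y $ i) \<and> cos (x $ i) = cos (y $ i)" for i
    using assms(2) by (simp add: torus_embedding_def vec_eq_iff)
  then have "\<exists>n::int. x $ i = y $ i + 2 * pi * n" for i
    by (simp add: sin_cos_eq_iff)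
  then obtain n where "\<And>i. x $ i = y $ i + 2 * pi * of_int (n i)" by metis
  then have "x = y + (\<chi> i. 2 * pi * of_int (n i))" by (simp add: vec_eq_iff)
  then show ?thesis using periodic_cont_shift_lattice[OF assms(1)] by simp
qed

lemma trig_poly_inner_torus_embedding:
  assumes "b \<in> Basis"
  shows "(\<lambda>x. complex_of_real (torus_embedding x \<bullet> b)) \<in> trig_poly"
proof -
  obtain i where "b = (axis i 1, 0) \<or> b = (0, axis i 1)"
    using assms unfolding Basis_prod_def Basis_vec_def by auto
  then show ?thesis
    by (auto simp: torus_embedding_def inner_axis trig_poly_cos trig_poly_sin)
qed

lemma trig_poly_real_polynomial_torus_embedding:
  assumes "real_polynomial_function g"
  shows "(\<lambda>x. complex_of_real (g (torus_embedding x))) \<in> trig_poly"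
  using assms
proof (induction g rule: real_polynomial_function.induct)
  case (linear g)
  then have lin: "linear g" by (rule bounded_linear.linear)
  have expand: "g z = (\<Sum>b\<in>Basis. (z \<bullet> b) * g b)" for z
  proof -
    have "g z = g (\<Sum>b\<in>Basis. (z \<bullet> b) *\<^sub>R b)" by (simp only: euclidean_representation)
    also have "\<dots> = (\<Sum>b\<in>Basis. (z \<bullet> b) *\<^sub>R g b)" by (simp only: linear_sum[OF lin] linear_scale[OF lin])
    finally show ?thesis by simp
  qed
  have "(\<lambda>x. complex_of_real (g (torus_embedding x))) =
        (\<lambda>x. \<Sum>b\<in>Basis. complex_of_real (torus_embedding x \<bullet> b) * complex_of_real (g b))"
    by (rule ext, subst expand, simp only: of_real_sum of_real_mult)
  then show ?case
    by (simp only:) (intro trig_poly_sum trig_poly_mult trig_poly_inner_torus_embedding trig_poly_const finite_Basis)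
next
  case (const c)
  then show ?case by (rule trig_poly_const)
next
  case (add f g)
  then show ?case by (simp add: trig_poly.add)
next
  case (mult f g)
  then show ?case by (simp add: trig_poly_mult)
qed

lemma periodic_cont_factor_torus_embedding:
  assumes hp: "periodic_cont h"
  obtains H where "continuous_on (torus_embedding ` torus_cell) H"
    "\<And>x. H (torus_embedding x) = h x"
proof
  define H where "H z = h (SOME x. torus_embedding x = z)" for z
  show H: "H (torus_embedding x) = h x" for x
    unfolding H_def by (rule periodic_cont_torus_embedding_eq[OF hp someI]) (rule refl)
  have cell: "compact (torus_cell :: (real^'n) set)" by (simp add: torus_cell_def)
  have closed: "closed (torus_embedding ` torus_cell)"
    by (intro compact_imp_closed compact_continuous_image continuous_on_torus_embedding cell)
  show "continuous_on (torus_embedding ` torus_cell) H"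
  proof (subst continuous_on_closed_vimage[OF closed], intro allI impI)
    fix T :: "complex set"
    assume "closed T"
    \<comment> \<open>Closed preimages: the preimage of \<open>T\<close> under \<open>H\<close> is the image of a compact set.\<close>
    then have "closed (h -` T)"
      using hp by (simp add: closed_vimage periodic_cont_def)
    then have "compact (torus_cell \<inter> h -` T)"
      by (rule compact_Int_closed[OF cell])
    moreover have "H -` T \<inter> torus_embedding ` torus_cell = torus_embedding ` (torus_cell \<inter> h -` T)"
      using H by auto
    ultimately show "closed (H -` T \<inter> torus_embedding ` torus_cell)"
      by (simp add: compact_imp_closed compact_continuous_image continuous_on_torus_embedding)
  qed
qed

lemma trig_poly_uniformly_dense:
  fixes h :: "real^'n \<Rightarrow> complex"
  assumes hp: "periodic_cont h" and e: "e > 0"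
  obtains P where "P \<in> trig_poly" "\<And>x. x \<in> torus_cell \<Longrightarrow> cmod (h x - P x) \<le> e"
proof -
  obtain H where Hc: "continuous_on (torus_embedding ` torus_cell) H"
    and H: "\<And>x. H (torus_embedding x) = h x"
    using periodic_cont_factor_torus_embedding[OF hp] by blast
  have S: "compact (torus_embedding ` (torus_cell :: (real^'n) set))"
    by (intro compact_continuous_image continuous_on_torus_embedding) (simp add: torus_cell_def)
  have e2: "e / 2 > 0" using e by simp
  obtain g1 where g1: "real_polynomial_function g1"
    "\<And>z. z \<in> torus_embedding ` torus_cell \<Longrightarrow> \<bar>Re (H z) - g1 z\<bar> < e / 2"
    using Stone_Weierstrass_real_polynomial_function[OF S continuous_on_Re[OF Hc] e2] by blast
  obtain g2 where g2: "real_polynomial_function g2"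
    "\<And>z. z \<in> torus_embedding ` torus_cell \<Longrightarrow> \<bar>Im (H z) - g2 z\<bar> < e / 2"
    using Stone_Weierstrass_real_polynomial_function[OF S continuous_on_Im[OF Hc] e2] by blast
  define P where "P x = complex_of_real (g1 (torus_embedding x)) + \<i> * complex_of_real (g2 (torus_embedding x))" for x
  have "P \<in> trig_poly"
    unfolding P_def
    by (intro trig_poly.add trig_poly.scale trig_poly_real_polynomial_torus_embedding g1(1) g2(1))
  moreover have "cmod (h x - P x) \<le> e" if "x \<in> torus_cell" for x
  proof -
    have "cmod (h x - P x) \<le> \<bar>Re (h x - P x)\<bar> + \<bar>Im (h x - P x)\<bar>" by (rule cmod_le)
    also have "\<dots> \<le> e"
      using g1(2)[of "torus_embedding x"] g2(2)[of "torus_embedding x"] that by (simp add: P_def H[symmetric])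
    finally show ?thesis .
  qed
  ultimately show ?thesis by (rule that)
qed

lemma integral_mult_cnj_trig_poly:
  assumes hc: "continuous_on UNIV h" and zero: "\<And>k. fourier_coeff h k = 0" and P: "P \<in> trig_poly"
  shows "integral torus_cell (\<lambda>x. h x * cnj (P x)) = 0"
  using P
proof (induction P rule: trig_poly.induct)
  case (fexp k)
  then show ?case using zero[of k] by (simp add: fourier_coeff_def)
next
  case (add f g)
  then show ?case
    using continuous_on_trig_poly[OF add.hyps(1)] continuous_on_trig_poly[OF add.hyps(2)] hc
    by (simp add: distrib_left integral_add continuous_integrable_on_torus_cell continuous_intros)
next
  case (scale f c)
  have "(\<lambda>x. h x * cnj (c * f x)) = (\<lambda>x. cnj c * (h x * cnj (f x)))"
    by (simp add: fun_eq_iff algebra_simps)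
  then show ?case using scale.IH by simp
qed

lemma norm_integral_mult_cnj_self_le:
  fixes h P :: "real^'n \<Rightarrow> complex"
  assumes hc: "continuous_on UNIV h" and zero: "\<And>k. fourier_coeff h k = 0" and P: "P \<in> trig_poly"
    and B: "\<And>x. x \<in> torus_cell \<Longrightarrow> cmod (h x) \<le> B"
    and \<delta>: "\<And>x. x \<in> torus_cell \<Longrightarrow> cmod (h x - P x) \<le> \<delta>"
  shows "cmod (integral torus_cell (\<lambda>x. h x * cnj (h x))) \<le> B * \<delta> * (2 * pi) ^ CARD('n)"
proof -
  have Pc: "continuous_on UNIV P" by (rule continuous_on_trig_poly[OF P])
  \<comment> \<open>\<open>h\<close> is orthogonal to \<open>P\<close>, so only the small error \<open>h - P\<close> contributes.\<close>
  have "integral torus_cell (\<lambda>x. h x * cnj (h x)) =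
        integral torus_cell (\<lambda>x. h x * cnj (h x - P x)) + integral torus_cell (\<lambda>x. h x * cnj (P x))"
    using hc Pc
    by (subst integral_add[symmetric])
      (auto simp: algebra_simps intro!: continuous_integrable_on_torus_cell continuous_intros)
  also have "\<dots> = integral torus_cell (\<lambda>x. h x * cnj (h x - P x))"
    using integral_mult_cnj_trig_poly[OF hc zero P] by simp
  finally have "cmod (integral torus_cell (\<lambda>x. h x * cnj (h x))) =
                cmod (integral torus_cell (\<lambda>x. h x * cnj (h x - P x)))" by simp
  also have "\<dots> \<le> B * \<delta> * (2 * pi) ^ CARD('n)"
  proof (rule norm_integral_torus_cell_le)
    show "continuous_on UNIV (\<lambda>x. h x * cnj (h x - P x))"
      using hc Pc by (intro continuous_intros)
    show "norm (h x * cnj (h x - P x)) \<le> B * \<delta>" if "x \<in> torus_cell" for x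
    proof -
      have "norm (h x * cnj (h x - P x)) = cmod (h x) * cmod (h x - P x)"
        by (simp only: norm_mult complex_mod_cnj)
      moreover have "0 \<le> B" using B[OF that] norm_ge_zero order_trans by blast
      ultimately show ?thesis
        using B[OF that] \<delta>[OF that] by (simp add: mult_mono)
    qed
  qed
  finally show ?thesis .
qed

lemma integral_mult_cnj_self_eq_0:
  fixes h :: "real^'n \<Rightarrow> complex"
  assumes hp: "periodic_cont h" and zero: "\<And>k. fourier_coeff h k = 0"
  shows "integral torus_cell (\<lambda>x. h x * cnj (h x)) = 0"
proof -
  have hc: "continuous_on UNIV h" using hp by (simp add: periodic_cont_def)
  obtain B where B: "\<And>x. cmod (h x) \<le> B" using periodic_cont_bounded[OF hp] by blast
  have B0: "0 \<le> B" using B[of 0] norm_ge_zero order_trans by blast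
  define V :: real where "V = (2 * pi) ^ CARD('n)"
  have V0: "V > 0" by (simp add: V_def)
  have "cmod (integral torus_cell (\<lambda>x. h x * cnj (h x))) \<le> 0 + e" if e: "e > 0" for e
  proof -
    define \<delta> where "\<delta> = e / ((B + 1) * V)"
    have \<delta>: "\<delta> > 0" using e B0 V0 by (simp add: \<delta>_def)
    obtain P where "P \<in> trig_poly" "\<And>x. x \<in> torus_cell \<Longrightarrow> cmod (h x - P x) \<le> \<delta>"
      using trig_poly_uniformly_dense[OF hp \<delta>] by blast
    then have "cmod (integral torus_cell (\<lambda>x. h x * cnj (h x))) \<le> B * \<delta> * V"
      unfolding V_def using B by (intro norm_integral_mult_cnj_self_le[OF hc zero])
    also have "\<dots> \<le> (B + 1) * \<delta> * V"
      using \<delta> V0 by (simp add: mult_right_mono)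
    also have "\<dots> = e"
      using B0 V0 by (simp add: \<delta>_def)
    finally show ?thesis by simp
  qed
  then have "cmod (integral torus_cell (\<lambda>x. h x * cnj (h x))) \<le> 0"
    by (rule field_le_epsilon)
  then show ?thesis by simp
qed

lemma integral_mult_cnj_self_eq_0_imp:
  fixes h :: "real^'n \<Rightarrow> complex"
  assumes hc: "continuous_on UNIV h" and int0: "integral torus_cell (\<lambda>x. h x * cnj (h x)) = 0"
    and x: "x \<in> torus_cell"
  shows "h x = 0"
proof -
  have "(\<lambda>x. h x * cnj (h x)) integrable_on torus_cell"
    using hc by (intro continuous_integrable_on_torus_cell continuous_intros)
  then have "((\<lambda>x. h x * cnj (h x)) has_integral 0) torus_cell"
    using int0 by (simp add: has_integral_integral)
  from has_integral_linear[OF this bounded_linear_Re]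
  have "((\<lambda>x. (cmod (h x))\<^sup>2) has_integral 0) (cbox 0 (\<chi> i. 2 * pi))"
    by (simp add: o_def torus_cell_def complex_norm_square[symmetric] del: of_real_power)
  moreover have "continuous_on (cbox 0 (\<chi> i. 2 * pi)) (\<lambda>x. (cmod (h x))\<^sup>2)"
    using hc by (intro continuous_intros) (auto intro: continuous_on_subset)
  moreover have "box 0 (\<chi> i. 2 * pi) \<noteq> ({} :: (real^'n) set)"
    by (auto simp: box_ne_empty(2) cart_eq_inner_axis[symmetric] Basis_vec_def)
  ultimately have "(cmod (h x))\<^sup>2 = 0"
    using x by (intro has_integral_0_cbox_imp_0[where a = 0 and b = "\<chi> i. 2 * pi"])
      (auto simp: torus_cell_def)
  then show ?thesis by simp
qed

lemma fourier_coeff_eq_0_imp_eq_0: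
  fixes h :: "real^'n \<Rightarrow> complex"
  assumes hp: "periodic_cont h" and zero: "\<And>k. fourier_coeff h k = 0"
  shows "h = (\<lambda>x. 0)"
proof (rule periodic_cont_eqI[OF hp])
  show "periodic_cont (\<lambda>x::real^'n. 0::complex)" by (simp add: periodic_cont_def)
  show "h x = 0" if "x \<in> torus_cell" for x
    using integral_mult_cnj_self_eq_0_imp[OF _ integral_mult_cnj_self_eq_0[OF hp zero] that] hp
    by (simp add: periodic_cont_def)
qed

lemma represents_unique:
  assumes "represents h c" "represents g c"
  shows "h = g"
proof -
  have hp: "periodic_cont h" and gp: "periodic_cont g" using assms by (auto simp: represents_def)
  have "(\<lambda>x. h x - g x) = (\<lambda>x. 0)"
    using hp gp assms
    by (intro fourier_coeff_eq_0_imp_eq_0 periodic_cont_diff)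
      (simp_all add: fourier_coeff_diff periodic_cont_def represents_def)
  then show ?thesis by (simp add: fun_eq_iff)
qed

lemma some_represents_eq:
  assumes "represents h c"
  shows "(SOME h. represents h c) = h"
  using represents_unique[OF someI[of "\<lambda>h. represents h c", OF assms] assms] .

section \<open>Absolutely summable Fourier series\<close>

definition fourier_series :: "(int^'n \<Rightarrow> complex) \<Rightarrow> real^'n \<Rightarrow> complex" where
  "fourier_series a x = (\<Sum>\<^sub>\<infinity>k. a k * fexp k x)"

lemma abs_summable_on_mult_fexp:
  assumes "(\<lambda>k. cmod (a k)) summable_on UNIV"
  shows "(\<lambda>k. norm (a k * fexp k x)) summable_on A"
  using summable_on_subset_banach[OF assms, of A] by (simp add: norm_mult)

lemma norm_fourier_series_minus_sum_le:
  fixes a :: "int^'n \<Rightarrow> complex"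
  assumes as: "(\<lambda>k. cmod (a k)) summable_on UNIV" and F: "finite F"
  shows "cmod (fourier_series a x - (\<Sum>k\<in>F. a k * fexp k x)) \<le>
           (\<Sum>\<^sub>\<infinity>k. cmod (a k)) - (\<Sum>k\<in>F. cmod (a k))"
proof -
  have U: "(UNIV :: (int^'n) set) = F \<union> - F" and d: "F \<inter> - F = {}" by auto
  have "fourier_series a x = (\<Sum>k\<in>F. a k * fexp k x) + (\<Sum>\<^sub>\<infinity>k\<in>-F. a k * fexp k x)"
    unfolding fourier_series_def
    by (subst U, subst infsum_Un_disjoint[OF _ _ d])
      (simp_all add: F abs_summable_summable[OF abs_summable_on_mult_fexp[OF as]])
  moreover have "(\<Sum>\<^sub>\<infinity>k. cmod (a k)) = (\<Sum>k\<in>F. cmod (a k)) + (\<Sum>\<^sub>\<infinity>k\<in>-F. cmod (a k))"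
    by (subst U, subst infsum_Un_disjoint[OF _ _ d]) (simp_all add: F summable_on_subset_banach[OF as])
  moreover have "cmod (\<Sum>\<^sub>\<infinity>k\<in>-F. a k * fexp k x) \<le> (\<Sum>\<^sub>\<infinity>k\<in>-F. cmod (a k))"
    using norm_infsum_bound[OF abs_summable_on_mult_fexp[OF as]] by (simp add: norm_mult)
  ultimately show ?thesis by simp
qed

lemma norm_fourier_series_le:
  "(\<lambda>k. cmod (a k)) summable_on UNIV \<Longrightarrow> cmod (fourier_series a x) \<le> (\<Sum>\<^sub>\<infinity>k. cmod (a k))"
  using norm_fourier_series_minus_sum_le[of a "{}"] by simp

lemma uniform_limit_fourier_series:
  assumes as: "(\<lambda>k. cmod (a k)) summable_on UNIV"
  shows "uniform_limit UNIV (\<lambda>F x. \<Sum>k\<in>F. a k * fexp k x) (fourier_series a) (finite_subsets_at_top UNIV)"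
proof (rule uniform_limitI)
  fix e :: real
  assume "e > 0"
  then obtain F0 where F0: "finite F0" "dist (\<Sum>k\<in>F0. cmod (a k)) (\<Sum>\<^sub>\<infinity>k. cmod (a k)) \<le> e / 2"
    using infsum_finite_approximation[OF as, of "e / 2"] by auto
  have "dist (\<Sum>k\<in>Y. a k * fexp k x) (fourier_series a x) < e" if "finite Y" "F0 \<subseteq> Y" for Y x
  proof -
    have "(\<Sum>k\<in>F0. cmod (a k)) \<le> (\<Sum>k\<in>Y. cmod (a k))"
      using that by (intro sum_mono2) auto
    then have "(\<Sum>\<^sub>\<infinity>k. cmod (a k)) - (\<Sum>k\<in>Y. cmod (a k)) \<le> e / 2"
      using F0(2) unfolding dist_real_def by arith
    then show ?thesis
      using norm_fourier_series_minus_sum_le[OF as \<open>finite Y\<close>, of x] \<open>e > 0\<close>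
      by (simp add: dist_norm norm_minus_commute)
  qed
  then show "\<forall>\<^sub>F F in finite_subsets_at_top UNIV. \<forall>x\<in>UNIV. dist (\<Sum>k\<in>F. a k * fexp k x) (fourier_series a x) < e"
    unfolding eventually_finite_subsets_at_top using F0(1) by blast
qed

lemma continuous_on_fourier_series:
  assumes "(\<lambda>k. cmod (a k)) summable_on UNIV"
  shows "continuous_on UNIV (fourier_series a)"
  by (rule uniform_limit_theorem[OF _ uniform_limit_fourier_series[OF assms]])
    (intro always_eventually allI continuous_intros continuous_on_fexp, simp)

lemma tendsto_fourier_coeff_uniform_limit:
  fixes f :: "'a \<Rightarrow> real^'n \<Rightarrow> complex"
  assumes "\<forall>\<^sub>F n in F. continuous_on UNIV (f n)" "continuous_on UNIV h" "uniform_limit UNIV f h F"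
  shows "((\<lambda>n. fourier_coeff (f n) k) \<longlongrightarrow> fourier_coeff h k) F"
proof (rule tendstoI)
  fix e :: real
  assume "e > 0"
  then have "\<forall>\<^sub>F n in F. \<forall>x\<in>UNIV. dist (f n x) (h x) < e / 2"
    using uniform_limitD[OF assms(3), of "e / 2"] by simp
  with assms(1) show "\<forall>\<^sub>F n in F. dist (fourier_coeff (f n) k) (fourier_coeff h k) < e"
  proof eventually_elim
    case (elim n)
    have "cmod (f n x - h x) \<le> e / 2" for x
      using elim(2) by (simp add: dist_norm less_imp_le)
    then have "cmod (fourier_coeff (\<lambda>x. f n x - h x) k) \<le> e / 2"
      using elim(1) assms(2) by (intro norm_fourier_coeff_le) (auto intro!: continuous_intros)
    then show ?case
      using \<open>e > 0\<close> elim assms(2) by (simp add: dist_norm fourier_coeff_diff)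
  qed
qed

lemma represents_fourier_series:
  assumes as: "(\<lambda>k. cmod (a k)) summable_on UNIV"
  shows "represents (fourier_series a) a"
  unfolding represents_def
proof
  show "periodic_cont (fourier_series a)"
    using continuous_on_fourier_series[OF as]
    by (simp add: periodic_cont_def fourier_series_def fexp_periodic)
  show "\<forall>m. fourier_coeff (fourier_series a) m = a m"
  proof
    fix m
    \<comment> \<open>The Fourier coefficients of the partial sums converge, and are eventually equal to \<open>a m\<close>.\<close>
    have "((\<lambda>F. fourier_coeff (\<lambda>x. \<Sum>k\<in>F. a k * fexp k x) m) \<longlongrightarrow> fourier_coeff (fourier_series a) m)
            (finite_subsets_at_top UNIV)"
    proof (rule tendsto_fourier_coeff_uniform_limit)
      show "\<forall>\<^sub>F F in finite_subsets_at_top UNIV. continuous_on UNIV (\<lambda>x. \<Sum>k\<in>F. a k * fexp k x)"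
        by (intro always_eventually allI continuous_intros continuous_on_fexp)
    qed (use as continuous_on_fourier_series uniform_limit_fourier_series in blast)+
    moreover have "\<forall>\<^sub>F F in finite_subsets_at_top UNIV. fourier_coeff (\<lambda>x. \<Sum>k\<in>F. a k * fexp k x) m = a m"
      unfolding eventually_finite_subsets_at_top
      by (intro exI[of _ "{m}"]) (auto simp: fourier_coeff_fexp_sum)
    then have "((\<lambda>F. fourier_coeff (\<lambda>x. \<Sum>k\<in>F. a k * fexp k x) m) \<longlongrightarrow> a m) (finite_subsets_at_top UNIV)"
      by (rule tendsto_eventually)
    ultimately show "fourier_coeff (fourier_series a) m = a m"
      using finite_subsets_at_top_neq_bot tendsto_unique by blast
  qed
qed

section \<open>A weighted Cauchy--Schwarz inequality\<close>

lemma mult_le_scaled_squares: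
  fixes X Y t :: real
  assumes "t > 0"
  shows "X * Y \<le> (t * X\<^sup>2 + Y\<^sup>2 / t) / 2"
proof -
  have "0 \<le> (t * X - Y)\<^sup>2" by simp
  then have "2 * t * (X * Y) \<le> t\<^sup>2 * X\<^sup>2 + Y\<^sup>2" by (simp add: power2_eq_square algebra_simps)
  then show ?thesis using assms by (simp add: field_simps power2_eq_square)
qed

lemma norm_cnj_mult_le_weighted:
  fixes p g :: complex and w t :: real
  assumes "w > 0" "t > 0"
  shows "cmod (cnj p * g) \<le> (t * (w powr \<tau> * (cmod p)\<^sup>2) + w powr (-\<tau>) * (cmod g)\<^sup>2 / t) / 2"
proof -
  have "sqrt (w powr \<tau>) * sqrt (w powr (-\<tau>)) = 1"
    using assms(1) by (simp add: real_sqrt_mult[symmetric] powr_add[symmetric])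
  then have "cmod (cnj p * g) = (sqrt (w powr \<tau>) * cmod p) * (sqrt (w powr (-\<tau>)) * cmod g)"
    by (simp add: norm_mult algebra_simps)
  also have "\<dots> \<le> (t * (w powr \<tau> * (cmod p)\<^sup>2) + w powr (-\<tau>) * (cmod g)\<^sup>2 / t) / 2"
    using mult_le_scaled_squares[OF assms(2), of "sqrt (w powr \<tau>) * cmod p" "sqrt (w powr (-\<tau>)) * cmod g"]
    by (simp add: power_mult_distrib)
  finally show ?thesis .
qed

lemma summable_norm_cnj_mult_weighted:
  fixes p g :: "'a \<Rightarrow> complex" and w :: "'a \<Rightarrow> real"
  assumes w: "\<And>k. w k > 0"
    and p: "(\<lambda>k. w k powr \<tau> * (cmod (p k))\<^sup>2) summable_on UNIV"
    and g: "(\<lambda>k. w k powr (-\<tau>) * (cmod (g k))\<^sup>2) summable_on UNIV"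
  shows "(\<lambda>k. cmod (cnj (p k) * g k)) summable_on UNIV"
    and "t > 0 \<Longrightarrow> (\<Sum>\<^sub>\<infinity>k. cmod (cnj (p k) * g k)) \<le>
          t / 2 * (\<Sum>\<^sub>\<infinity>k. w k powr \<tau> * (cmod (p k))\<^sup>2) +
          1 / (2 * t) * (\<Sum>\<^sub>\<infinity>k. w k powr (-\<tau>) * (cmod (g k))\<^sup>2)"
proof -
  define s where "s k = w k powr \<tau> * (cmod (p k))\<^sup>2" for k
  define u where "u k = w k powr (-\<tau>) * (cmod (g k))\<^sup>2" for k
  have s: "s summable_on UNIV" and u: "u summable_on UNIV"
    using p g by (simp_all add: s_def[abs_def] u_def[abs_def])
  have pt: "cmod (cnj (p k) * g k) \<le> t / 2 * s k + 1 / (2 * t) * u k" if "t > 0" for t k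
    using norm_cnj_mult_le_weighted[OF w that, where p = "p k" and g = "g k"]
    by (simp add: s_def u_def field_simps)
  have st: "(\<lambda>k. t / 2 * s k + 1 / (2 * t) * u k) summable_on UNIV" for t
    by (intro summable_on_add summable_on_cmult_right s u)
  show sum: "(\<lambda>k. cmod (cnj (p k) * g k)) summable_on UNIV"
    by (rule summable_on_comparison_test[OF st[of 1]]) (use pt[of 1] in auto)
  assume t: "t > 0"
  have "(\<Sum>\<^sub>\<infinity>k. cmod (cnj (p k) * g k)) \<le> (\<Sum>\<^sub>\<infinity>k. t / 2 * s k + 1 / (2 * t) * u k)"
    by (rule infsum_mono[OF sum st]) (use pt[OF t] in auto)
  also have "\<dots> = (\<Sum>\<^sub>\<infinity>k. t / 2 * s k) + (\<Sum>\<^sub>\<infinity>k. 1 / (2 * t) * u k)"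
    by (intro infsum_add summable_on_cmult_right s u)
  also have "\<dots> = t / 2 * (\<Sum>\<^sub>\<infinity>k. s k) + 1 / (2 * t) * (\<Sum>\<^sub>\<infinity>k. u k)"
    by (simp only: infsum_cmult_right')
  finally show "(\<Sum>\<^sub>\<infinity>k. cmod (cnj (p k) * g k)) \<le>
      t / 2 * (\<Sum>\<^sub>\<infinity>k. w k powr \<tau> * (cmod (p k))\<^sup>2) +
      1 / (2 * t) * (\<Sum>\<^sub>\<infinity>k. w k powr (-\<tau>) * (cmod (g k))\<^sup>2)"
    by (simp add: s_def u_def)
qed

text \<open>Stated in a form linear in \<open>\<surd>G\<close>, as needed for the embedding constant.\<close>

lemma infsum_norm_cnj_mult_le_weighted:
  fixes p g :: "'a \<Rightarrow> complex" and w :: "'a \<Rightarrow> real"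
  assumes w: "\<And>k. w k > 0"
    and p: "(\<lambda>k. w k powr \<tau> * (cmod (p k))\<^sup>2) summable_on UNIV"
    and g: "(\<lambda>k. w k powr (-\<tau>) * (cmod (g k))\<^sup>2) summable_on UNIV"
  defines "S \<equiv> \<Sum>\<^sub>\<infinity>k. w k powr \<tau> * (cmod (p k))\<^sup>2"
    and "G \<equiv> \<Sum>\<^sub>\<infinity>k. w k powr (-\<tau>) * (cmod (g k))\<^sup>2"
  shows "(\<Sum>\<^sub>\<infinity>k. cmod (cnj (p k) * g k)) \<le> sqrt G * (S + 1) / 2"
proof -
  note bound = summable_norm_cnj_mult_weighted(2)[OF w p g, folded S_def G_def]
  have S0: "S \<ge> 0" and G0: "G \<ge> 0"
    by (simp_all add: S_def G_def infsum_nonneg)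
  show ?thesis
  proof (cases "G > 0")
    case True
    then have "1 / (2 * sqrt G) * G = sqrt G / 2"
      by (simp add: field_simps)
    then show ?thesis
      using bound[of "sqrt G"] True by (simp add: algebra_simps add_divide_distrib)
  next
    case False
    then have "G = 0" using G0 by simp
    \<comment> \<open>Then let \<open>t \<rightarrow> 0\<close> in the bound.\<close>
    have "(\<Sum>\<^sub>\<infinity>k. cmod (cnj (p k) * g k)) \<le> 0 + e" if e: "e > 0" for e
    proof -
      define t where "t = e / (S + 1)"
      have t: "t > 0" using e S0 by (simp add: t_def)
      have "(\<Sum>\<^sub>\<infinity>k. cmod (cnj (p k) * g k)) \<le> t / 2 * S"
        using bound[OF t] \<open>G = 0\<close> by simp
      also have "\<dots> \<le> t * (S + 1)"
        using t S0 by (intro mult_mono) auto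
      also have "\<dots> = e" using S0 by (simp add: t_def)
      finally show ?thesis by simp
    qed
    then show ?thesis using \<open>G = 0\<close> by (simp add: field_le_epsilon)
  qed
qed

section \<open>Sobolev spaces and the measurement space\<close>

lemma L2_norm_torus_nonneg:
  fixes f :: "real^'n \<Rightarrow> complex"
  assumes "continuous_on UNIV f"
  shows "L2_norm_torus f \<ge> 0"
proof -
  have "integral torus_cell (\<lambda>x. (cmod (f x))\<^sup>2) \<ge> 0"
    using assms by (intro integral_nonneg continuous_integrable_on_torus_cell continuous_intros) auto
  then show ?thesis by (simp add: L2_norm_torus_def)
qed

lemma L2_norm_torus_le:
  fixes f :: "real^'n \<Rightarrow> complex"
  assumes "continuous_on UNIV f" "M \<ge> 0" "\<And>x. cmod (f x) \<le> M"
  shows "L2_norm_torus f \<le> M"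
proof -
  have "integral torus_cell (\<lambda>x. (cmod (f x))\<^sup>2) \<le> integral torus_cell (\<lambda>x::real^'n. M\<^sup>2)"
    using assms by (intro integral_le continuous_integrable_on_torus_cell continuous_intros)
      (auto simp: power_mono)
  also have "\<dots> = (2 * pi) ^ CARD('n) * M\<^sup>2"
    using content_torus_cell[where 'n='n] by (simp add: torus_cell_def)
  finally have "sqrt (1 / (2 * pi) ^ CARD('n) * integral torus_cell (\<lambda>x. (cmod (f x))\<^sup>2)) \<le> sqrt (M\<^sup>2)"
    by (intro real_sqrt_le_mono) (simp add: field_simps)
  then show ?thesis using assms(2) by (simp add: L2_norm_torus_def)
qed

lemma continuous_on_proj_null_fun: "continuous_on UNIV (proj_null_fun Lh g)"
  unfolding proj_null_fun_def
  by (cases "finite {k. Lh k = 0}") (auto intro!: continuous_intros continuous_on_fexp)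

lemma norm_le_CL_norm:
  assumes "represents h (lsi (adj (pinv Lh)) g)"
  shows "cmod (h x) \<le> CL_norm Lh g"
proof -
  obtain B where "\<And>x. cmod (h x) \<le> B"
    using assms periodic_cont_bounded by (auto simp: represents_def)
  then have "cmod (h x) \<le> (SUP x\<in>UNIV. cmod (h x))"
    by (intro cSUP_upper bdd_aboveI2) auto
  also have "\<dots> \<le> sqrt ((SUP x\<in>UNIV. cmod (h x))\<^sup>2 + (L2_norm_torus (proj_null_fun Lh g))\<^sup>2)"
    by (simp add: real_le_rsqrt)
  finally show ?thesis by (simp add: CL_norm_def some_represents_eq[OF assms])
qed

lemma CL_norm_le:
  assumes "represents h (lsi (adj (pinv Lh)) g)"
    and "\<And>x. cmod (h x) \<le> M" and "\<And>x. cmod (proj_null_fun Lh g x) \<le> N"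
  shows "CL_norm Lh g \<le> M + N"
proof -
  define sup where "sup = (SUP x\<in>UNIV. cmod (h x))"
  have "cmod (h 0) \<le> sup"
    unfolding sup_def using assms(2) by (intro cSUP_upper bdd_aboveI2) auto
  then have sup0: "0 \<le> sup" by (meson norm_ge_zero order_trans)
  have L0: "0 \<le> L2_norm_torus (proj_null_fun Lh g)"
    by (rule L2_norm_torus_nonneg[OF continuous_on_proj_null_fun])
  have "sup \<le> M"
    unfolding sup_def using assms(2) by (intro cSUP_least) auto
  moreover have "N \<ge> 0"
    using assms(3) norm_ge_zero order_trans by blast
  then have "L2_norm_torus (proj_null_fun Lh g) \<le> N"
    using assms(3) by (intro L2_norm_torus_le continuous_on_proj_null_fun)
  moreover have "CL_norm Lh g = sqrt (sup\<^sup>2 + (L2_norm_torus (proj_null_fun Lh g))\<^sup>2)"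
    by (simp add: CL_norm_def sup_def some_represents_eq[OF assms(1)])
  ultimately show ?thesis
    using sqrt_sum_squares_le_sum[OF sup0 L0] by linarith
qed

lemma sobolev_weight_pos: "(0::real) < 1 + (knorm k)\<^sup>2"
  by (simp add: add_pos_nonneg)

lemma sobolev_finite_support:
  fixes g :: "int^'n \<Rightarrow> complex"
  assumes "finite F" "\<And>k. k \<notin> F \<Longrightarrow> g k = 0"
  shows "sobolev \<sigma> g"
    and "sobolev_norm \<sigma> g = sqrt (\<Sum>k\<in>F. (1 + (knorm k)\<^sup>2) powr \<sigma> * (cmod (g k))\<^sup>2)"
proof -
  have sum: "((\<lambda>k. (1 + (knorm k)\<^sup>2) powr \<sigma> * (cmod (g k))\<^sup>2) has_sum
               (\<Sum>k\<in>F. (1 + (knorm k)\<^sup>2) powr \<sigma> * (cmod (g k))\<^sup>2)) UNIV"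
    using assms by (intro has_sum_finite_neutralI) auto
  have "cmod (g k) \<le> (\<Sum>j\<in>F. cmod (g j)) * (1 + knorm k) ^ 0" for k
    using assms by (cases "k \<in> F") (auto intro: member_le_sum simp: sum_nonneg)
  then have "slowly_growing g"
    unfolding slowly_growing_def by blast
  then show "sobolev \<sigma> g"
    using sum by (auto simp: sobolev_def summable_on_def)
  show "sobolev_norm \<sigma> g = sqrt (\<Sum>k\<in>F. (1 + (knorm k)\<^sup>2) powr \<sigma> * (cmod (g k))\<^sup>2)"
    using infsumI[OF sum] by (simp add: sobolev_norm_def)
qed

lemma norm_le_sobolev_norm:
  assumes "sobolev \<sigma> g"
  shows "cmod (g k) \<le> sqrt ((1 + (knorm k)\<^sup>2) powr (-\<sigma>)) * sobolev_norm \<sigma> g"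
proof -
  define w where "w = 1 + (knorm k)\<^sup>2"
  have w: "w > 0" by (simp add: w_def sobolev_weight_pos)
  have "w powr \<sigma> * (cmod (g k))\<^sup>2 \<le> (\<Sum>\<^sub>\<infinity>k. (1 + (knorm k)\<^sup>2) powr \<sigma> * (cmod (g k))\<^sup>2)"
    using finite_sum_le_infsum[of "\<lambda>k. (1 + (knorm k)\<^sup>2) powr \<sigma> * (cmod (g k))\<^sup>2" UNIV "{k}"] assms
    by (simp add: sobolev_def w_def)
  then have "(cmod (g k))\<^sup>2 \<le> w powr (-\<sigma>) * (sobolev_norm \<sigma> g)\<^sup>2"
    using w by (simp add: sobolev_norm_def powr_minus divide_simps infsum_nonneg mult.commute)
  then have "cmod (g k) \<le> sqrt (w powr (-\<sigma>) * (sobolev_norm \<sigma> g)\<^sup>2)"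
    by (rule real_le_rsqrt)
  moreover have "0 \<le> sobolev_norm \<sigma> g"
    by (simp add: sobolev_norm_def infsum_nonneg)
  ultimately show ?thesis
    by (simp add: w_def real_sqrt_mult)
qed

lemma le_square_if_le_mult_sqrt:
  fixes x C :: real
  assumes "x \<le> C * sqrt x"
  shows "x \<le> C\<^sup>2"
proof (cases "x \<le> 0")
  case False
  then have "sqrt x * sqrt x \<le> C * sqrt x" using assms by simp
  then have "sqrt x \<le> C" by (rule mult_right_le_imp_le) (use False in simp)
  then have "(sqrt x)\<^sup>2 \<le> C\<^sup>2" using False by (intro power_mono) auto
  then show ?thesis using False by simp
qed (use order_trans[OF _ zero_le_power2] in blast)

lemma sobolev_embeds_CL_imp_summable:
  assumes "sobolev_embeds_CL \<tau> Lh"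
  shows "(\<lambda>k. (1 + (knorm k)\<^sup>2) powr \<tau> * (cmod (pinv Lh k))\<^sup>2) summable_on UNIV"
proof -
  define s where "s k = (1 + (knorm k)\<^sup>2) powr \<tau> * (cmod (pinv Lh k))\<^sup>2" for k
  obtain C where C: "\<And>g. sobolev (-\<tau>) g \<Longrightarrow> CL_norm Lh g \<le> C * sobolev_norm (-\<tau>) g"
    using assms unfolding sobolev_embeds_CL_def by blast
  have "sum s F \<le> C\<^sup>2" if F: "finite F" for F
  proof -
    \<comment> \<open>Test the embedding on the \<open>g\<close> for which \<open>(L\<^sup>\<dagger>)\<^sup>* g\<close> has Fourier sequence \<open>s\<close> on \<open>F\<close>;
      its value at \<open>0\<close> is then the partial sum \<open>\<Sum>\<^sub>F s\<close>.\<close>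
    define g where "g k = (if k \<in> F then of_real ((1 + (knorm k)\<^sup>2) powr \<tau>) * pinv Lh k else 0)" for k
    have "(1 + (knorm k)\<^sup>2) powr (-\<tau>) * (cmod (g k))\<^sup>2 = s k" if "k \<in> F" for k
      using that sobolev_weight_pos[of k]
      by (simp add: g_def s_def norm_mult power_mult_distrib powr_minus power2_eq_square)
    then have sob: "sobolev (-\<tau>) g" and norm: "sobolev_norm (-\<tau>) g = sqrt (sum s F)"
      using sobolev_finite_support[OF F, of g "-\<tau>"] by (auto simp: g_def)
    have "lsi (adj (pinv Lh)) g = (\<lambda>k. if k \<in> F then of_real (s k) else 0)"
      by (auto simp: fun_eq_iff lsi_def adj_def g_def s_def complex_norm_square mult_ac
          simp del: of_real_power)
    then have rep: "represents (\<lambda>x. \<Sum>k\<in>F. of_real (s k) * fexp k x) (lsi (adj (pinv Lh)) g)"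
      using represents_fexp_sum[OF F] by simp
    have "0 \<le> sum s F" by (simp add: s_def sum_nonneg)
    then have "sum s F = cmod (\<Sum>k\<in>F. of_real (s k) * fexp k 0)"
      by (simp add: of_real_sum[symmetric] del: of_real_sum)
    also have "\<dots> \<le> CL_norm Lh g" by (rule norm_le_CL_norm[OF rep])
    also have "\<dots> \<le> C * sqrt (sum s F)" using C[OF sob] norm by simp
    finally show ?thesis by (rule le_square_if_le_mult_sqrt)
  qed
  then have "s summable_on UNIV"
    by (intro nonneg_bdd_above_summable_on bdd_aboveI2) (auto simp: s_def)
  then show ?thesis by (simp add: s_def[abs_def])
qed

lemma summable_imp_sobolev_embeds_CL:
  assumes summable: "(\<lambda>k. (1 + (knorm k)\<^sup>2) powr \<tau> * (cmod (pinv Lh k))\<^sup>2) summable_on UNIV"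
  shows "sobolev_embeds_CL \<tau> Lh"
proof -
  define S where "S = (\<Sum>\<^sub>\<infinity>k. (1 + (knorm k)\<^sup>2) powr \<tau> * (cmod (pinv Lh k))\<^sup>2)"
  define K where "K = (\<Sum>k\<in>{k. Lh k = 0}. sqrt ((1 + (knorm k)\<^sup>2) powr \<tau>))"
  have "in_CL Lh g \<and> CL_norm Lh g \<le> ((S + 1) / 2 + K) * sobolev_norm (-\<tau>) g"
    if g: "sobolev (-\<tau>) g" for g
  proof -
    define a where "a = lsi (adj (pinv Lh)) g"
    have a: "a = (\<lambda>k. cnj (pinv Lh k) * g k)" by (simp add: a_def lsi_def adj_def)
    have g': "(\<lambda>k. (1 + (knorm k)\<^sup>2) powr (-\<tau>) * (cmod (g k))\<^sup>2) summable_on UNIV"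
      using g by (simp add: sobolev_def)
    have as: "(\<lambda>k. cmod (a k)) summable_on UNIV"
      using summable_norm_cnj_mult_weighted(1)[OF sobolev_weight_pos summable g'] by (simp add: a)
    have rep: "represents (fourier_series a) (lsi (adj (pinv Lh)) g)"
      using represents_fourier_series[OF as] by (simp add: a_def)
    have "cmod (fourier_series a x) \<le> sobolev_norm (-\<tau>) g * (S + 1) / 2" for x
      using norm_fourier_series_le[OF as, of x] infsum_norm_cnj_mult_le_weighted[OF sobolev_weight_pos summable g']
      by (simp add: a sobolev_norm_def S_def)
    moreover have "cmod (proj_null_fun Lh g x) \<le> K * sobolev_norm (-\<tau>) g" for x
    proof -
      have "cmod (proj_null_fun Lh g x) \<le> (\<Sum>k\<in>{k. Lh k = 0}. cmod (g k))"
        unfolding proj_null_fun_def by (rule norm_sum[THEN order_trans]) (simp add: norm_mult)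
      also have "\<dots> \<le> K * sobolev_norm (-\<tau>) g"
        unfolding K_def sum_distrib_right using norm_le_sobolev_norm[OF g] by (intro sum_mono) simp
      finally show ?thesis .
    qed
    ultimately have "CL_norm Lh g \<le> sobolev_norm (-\<tau>) g * (S + 1) / 2 + K * sobolev_norm (-\<tau>) g"
      by (rule CL_norm_le[OF rep])
    moreover have "in_CL Lh g"
      using g rep by (auto simp: in_CL_def is_continuous_dist_def sobolev_def)
    ultimately show ?thesis by (simp add: algebra_simps)
  qed
  then show ?thesis unfolding sobolev_embeds_CL_def by blast
qed

theorem mainTheorem12:
  fixes Lh :: "int^'n \<Rightarrow> complex" and \<tau> :: real
  assumes "spline_admissible Lh"
  shows "(sobolev_embeds_CL \<tau> Lh \<longleftrightarrow> sobolev \<tau> (lsi (pinv Lh) dirac_comb))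
       \<and> (sobolev \<tau> (lsi (pinv Lh) dirac_comb) \<longleftrightarrow>
            (\<lambda>k. (1 + (knorm k)^2) powr \<tau> * (cmod (pinv Lh k))^2) summable_on UNIV)"
proof -
  have "lsi (pinv Lh) dirac_comb = pinv Lh"
    by (simp add: fun_eq_iff lsi_def dirac_comb_def)
  moreover have "slowly_growing (pinv Lh)"
    using assms by (simp add: spline_admissible_def)
  ultimately have "sobolev \<tau> (lsi (pinv Lh) dirac_comb) \<longleftrightarrow>
      (\<lambda>k. (1 + (knorm k)^2) powr \<tau> * (cmod (pinv Lh k))^2) summable_on UNIV"
    by (simp add: sobolev_def)
  then show ?thesis
    using sobolev_embeds_CL_imp_summable summable_imp_sobolev_embeds_CL by blast
qed

end
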